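(* In the While-language extended with non-deterministic input, for all commands $c_1,c_2$ and store $\sigma$: if $(c_1;c_2,\sigma)\to^\infty$ and there is no store $\sigma'$ with $(c_1,\sigma)\to^*(\mathsf{skip},\sigma')$, then $(c_1,\sigma)\to^\infty$.
   Context: Extended While-language syntax: variables $x$ range over a countably infinite set $\mathit{Var}$; $n$ ranges over natural numbers; values are $v ::= \mathsf{null}\mid n$ ($\mathsf{null}$ distinct from every natural number); expressions are $e ::= v\mid x\mid e_1\oplus e_2\mid\mathsf{input}$ with $\oplus\in\{+,-,*\}$, where $\oplus(n_1,n_2)$ is the result of the operation on naturals; commands are $c ::= \mathsf{skip}\mid\mathsf{alloc}\ x\mid x:=e\mid c_1;c_2\mid \mathsf{if}\ e\ c_1\ c_2\mid\mathsf{while}\ e\ c$. A store $\sigma$ is a finite partial map from $\mathit{Var}$ to values, with domain $\mathrm{dom}(\sigma)$, lookup $\sigma(x)$, update $\sigma[x\mapsto v]$. Expression evaluation $(e,\sigma)\Rightarrow_E v$ is the least relation with: $(v,\sigma)\Rightarrow_E v$; $(x,\sigma)\Rightarrow_E\sigma(x)$ if $x\in\mathrm{dom}(\sigma)$; if $(e_1,\sigma)\Rightarrow_E n_1$ and $(e_2,\sigma)\Rightarrow_E n_2$ with $n_1,n_2$ naturals then $(e_1\oplus e_2,\sigma)\Rightarrow_E\oplus(n_1,n_2)$; and $(\mathsf{input},\sigma)\Rightarrow_E v$ for every value $v$ (non-deterministic input). Small-step relation $(c,\sigma)\to(c',\sigma')$ is the least relation with: $(\mathsf{alloc}\ x,\sigma)\to(\mathsf{skip},\sigma[x\mapsto\mathsf{null}])$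 if $x\notin\mathrm{dom}(\sigma)$; $(x:=e,\sigma)\to(\mathsf{skip},\sigma[x\mapsto v])$ if $x\in\mathrm{dom}(\sigma)$ and $(e,\sigma)\Rightarrow_E v$; $(c_1;c_2,\sigma)\to(c_1';c_2,\sigma')$ if $(c_1,\sigma)\to(c_1',\sigma')$; $(\mathsf{skip};c_2,\sigma)\to(c_2,\sigma)$; $(\mathsf{if}\ e\ c_1\ c_2,\sigma)\to(c_1,\sigma)$ if $(e,\sigma)\Rightarrow_E v$, $v\neq 0$; $(\mathsf{if}\ e\ c_1\ c_2,\sigma)\to(c_2,\sigma)$ if $(e,\sigma)\Rightarrow_E 0$; $(\mathsf{while}\ e\ c,\sigma)\to(c;\mathsf{while}\ e\ c,\sigma)$ if $(e,\sigma)\Rightarrow_E v$, $v\neq0$; $(\mathsf{while}\ e\ c,\sigma)\to(\mathsf{skip},\sigma)$ if $(e,\sigma)\Rightarrow_E 0$. $\to^*$ is its reflexive-transitive closure. The predicate $(c,\sigma)\to^\infty$ is coinductively defined (greatest predicate) by: if $(c,\sigma)\to(c',\sigma')$ and $(c',\sigma')\to^\infty$ then $(c,\sigma)\to^\infty$. *)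

theory Defs
  imports Main
begin

type_synonym vname = string

datatype val = Null | N nat

datatype bop = Plus | Minus | Times

fun apply_bop :: "bop \<Rightarrow> nat \<Rightarrow> nat \<Rightarrow> nat" where
  "apply_bop Plus a b = a + b"
| "apply_bop Minus a b = a - b"
| "apply_bop Times a b = a * b"

datatype exp = Val val | Var vname | BinOp exp bop exp | Input

datatype com = Skip | Alloc vname | Assign vname exp | Seq com com
  | If exp com com | While exp com

type_synonym store = "vname \<rightharpoonup> val"

inductive eval :: "exp \<Rightarrow> store \<Rightarrow> val \<Rightarrow> bool" where
  EVal: "eval (Val v) \<sigma> v"
| EVar: "\<sigma> x = Some v \<Longrightarrow> eval (Var x) \<sigma> v"
| EBin: "eval e1 \<sigma> (N n1) \<Longrightarrow> eval e2 \<sigma> (N n2) \<Longrightarrow>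
         eval (BinOp e1 op e2) \<sigma> (N (apply_bop op n1 n2))"
| EInput: "eval Input \<sigma> v"

inductive step :: "com \<times> store \<Rightarrow> com \<times> store \<Rightarrow> bool" (infix "\<rightarrow>" 55) where
  SAlloc: "x \<notin> dom \<sigma> \<Longrightarrow> (Alloc x, \<sigma>) \<rightarrow> (Skip, \<sigma>(x \<mapsto> Null))"
| SAssign: "x \<in> dom \<sigma> \<Longrightarrow> eval e \<sigma> v \<Longrightarrow> (Assign x e, \<sigma>) \<rightarrow> (Skip, \<sigma>(x \<mapsto> v))"
| SSeq1: "(c1, \<sigma>) \<rightarrow> (c1', \<sigma>') \<Longrightarrow> (Seq c1 c2, \<sigma>) \<rightarrow> (Seq c1' c2, \<sigma>')"
| SSeq2: "(Seq Skip c2, \<sigma>) \<rightarrow> (c2, \<sigma>)"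
| SIfT: "eval e \<sigma> v \<Longrightarrow> v \<noteq> N 0 \<Longrightarrow> (If e c1 c2, \<sigma>) \<rightarrow> (c1, \<sigma>)"
| SIfF: "eval e \<sigma> (N 0) \<Longrightarrow> (If e c1 c2, \<sigma>) \<rightarrow> (c2, \<sigma>)"
| SWhileT: "eval e \<sigma> v \<Longrightarrow> v \<noteq> N 0 \<Longrightarrow> (While e c, \<sigma>) \<rightarrow> (Seq c (While e c), \<sigma>)"
| SWhileF: "eval e \<sigma> (N 0) \<Longrightarrow> (While e c, \<sigma>) \<rightarrow> (Skip, \<sigma>)"

abbreviation steps :: "com \<times> store \<Rightarrow> com \<times> store \<Rightarrow> bool" (infix "\<rightarrow>*" 55) where
  "cs \<rightarrow>* cs' \<equiv> step\<^sup>*\<^sup>* cs cs'"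

coinductive diverges :: "com \<times> store \<Rightarrow> bool" where
  "cs \<rightarrow> cs' \<Longrightarrow> diverges cs' \<Longrightarrow> diverges cs"

end

theory Submission
  imports Defs
begin

text \<open>A step of \<open>c1;c2\<close> is either a step of \<open>c1\<close> under the sequence, or the
  discarding of a finished \<open>c1 = skip\<close>. As long as \<open>c1\<close> cannot reach \<open>skip\<close>, only
  the first kind occurs, so a diverging run of \<open>c1;c2\<close> projects to a diverging run
  of \<open>c1\<close>.\<close>

lemma step_Seq_cases:
  assumes "(Seq c1 c2, \<sigma>) \<rightarrow> cs'"
  obtains c1' \<sigma>' where "(c1, \<sigma>) \<rightarrow> (c1', \<sigma>')" and "cs' = (Seq c1' c2, \<sigma>')"
  | "c1 = Skip"
  using assms by (cases rule: step.cases) auto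

lemma not_reaches_Skip_step:
  assumes "\<not> (\<exists>\<sigma>'. cs \<rightarrow>* (Skip, \<sigma>'))" and "cs \<rightarrow> cs'"
  shows "\<not> (\<exists>\<sigma>'. cs' \<rightarrow>* (Skip, \<sigma>'))"
  using assms converse_rtranclp_into_rtranclp by metis

lemma diverges_Seq_left:
  assumes "diverges (Seq c1 c2, \<sigma>)" and "\<not> (\<exists>\<sigma>'. (c1, \<sigma>) \<rightarrow>* (Skip, \<sigma>'))"
  shows "diverges (c1, \<sigma>)"
  using assms
proof (coinduction arbitrary: c1 \<sigma>)
  case (diverges c1 \<sigma>)
  then have no_Skip: "\<not> (\<exists>\<sigma>'. (c1, \<sigma>) \<rightarrow>* (Skip, \<sigma>'))" by blast
  from diverges obtain cs' where step: "(Seq c1 c2, \<sigma>) \<rightarrow> cs'" and div: "diverges cs'"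
    by (auto elim: diverges.cases)
  have "c1 \<noteq> Skip"
    using no_Skip by blast
  with step obtain c1' \<sigma>' where step1: "(c1, \<sigma>) \<rightarrow> (c1', \<sigma>')"
    and "cs' = (Seq c1' c2, \<sigma>')"
    by (auto elim: step_Seq_cases)
  moreover have "\<not> (\<exists>\<sigma>''. (c1', \<sigma>') \<rightarrow>* (Skip, \<sigma>''))"
    using not_reaches_Skip_step[OF no_Skip step1] .
  ultimately show ?case
    using div by blast
qed

theorem lemma25:
  fixes c1 c2 :: com and \<sigma> :: store
  assumes "finite (dom \<sigma>)"
    and "diverges (Seq c1 c2, \<sigma>)"
    and "\<not> (\<exists>\<sigma>'. (c1, \<sigma>) \<rightarrow>* (Skip, \<sigma>'))"
  shows "diverges (c1, \<sigma>)"
  using diverges_Seq_left assms(2,3) .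

end
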